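(* In the setting described in the context, assume $N_f,N_m\ge 0$, the face quadrature is exact for $Q^{N+N_f}$ on each face, and the mortar quadrature is exact for $Q^{N+N_m}$ on each face. Let $g_{ij}$ ($i,j=1,\dots,d$) be polynomials on $\hat D$ satisfying the discrete geometric conservation law $\sum_{j=1}^d\partial g_{ij}/\partial\hat x_j=0$ for each $i$, and suppose that for some integer $N_{\rm geo}\ge1$ one of the following holds: (a) every $g_{ij}\in Q^{N_{\rm geo}}(\hat D)$ and $N_{\rm geo}\le\min(N,N_f,N_m)$; or (b) every $g_{ij}$ has degree at most $N_{\rm geo}$ in $\hat x_j$ and at most $N_{\rm geo}-1$ in each $\hat x_k$, $k\ne j$, and $N_{\rm geo}\le\min(N,N_f+1,N_m+1)$. Then for each $i=1,\dots,d$, $$Q_{i,m}+Q_{i,m}^T=\begin{bmatrix}0&&\\&0&\\&&B_{i,m}\end{bmatrix},\qquad Q_{i,m}\mathbf 1=\mathbf 0.$$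
   Context: Fix $d\in\{2,3\}$, $N\ge 1$, and a 1D quadrature rule on $[-1,1]$ with $N+1$ distinct nodes $x_1,\dots,x_{N+1}$ (either Gauss–Legendre or Gauss–Lobatto nodes) and positive weights $w_1,\dots,w_{N+1}$; let $\ell_1,\dots,\ell_{N+1}$ be the degree-$N$ Lagrange basis at these nodes. Set $\hat M_{1D}=\mathrm{diag}(w_1,\dots,w_{N+1})$ and $(\hat Q_{1D})_{jk}=w_j\ell_k'(x_j)$. On the reference element $\hat D=[-1,1]^d$ the volume nodes $\hat{\mathbf x}$ are the tensor grid of the 1D nodes, $\hat M=\hat M_{1D}\otimes\cdots\otimes\hat M_{1D}$ ($d$ factors), and $\hat Q_i=A_1\otimes\cdots\otimes A_d$ with $A_i=\hat Q_{1D}$ and $A_k=\hat M_{1D}$ for $k\ne i$. The face nodes $\hat{\mathbf x}_f$ are, for each of the $2d$ faces $\{\hat x_k=\pm1\}$, the points with $\hat x_k=\pm1$ and the other coordinates ranging over the 1D nodes; each face node carries the weight equal to the product of the 1D weights of its other coordinates, and $\hat M_f$ is the diagonal matrix of these face weights. $E$ maps the values at volume nodes of a polynomial in $Q^N(\hat D)$ to its values at the face nodes. The reference normal component $\hat n_i$ at any point of the face $\{\hat x_k=\pm1\}$ equals $\pm\delta_{ik}$; $\hat B_{i,f}=\mathrm{diag}(\hat{\mathbf n}_{i,f})\hat M_f$ where $\hat{\mathbf n}_{i,f}$ holds $\hat n_i$ at the face nodes. On each face choose mortar nodes $\hat{\mathbf x}_m$ (lying on that face) with real weights; $\hat M_m$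 is the diagonal matrix of all mortar weights; $E_{mf}$ is block diagonal over faces, its block for a face mapping values at the face nodes of a polynomial in $Q^N$ of the $d-1$ face coordinates to its values at that face's mortar nodes; $E_{fm}=\hat M_f^{-1}E_{mf}^T\hat M_m$; $\hat B_{i,m}=\mathrm{diag}(\hat{\mathbf n}_{i,m})\hat M_m$ with $\hat{\mathbf n}_{i,m}$ the values of $\hat n_i$ at the mortar nodes. The mortar-based hybridized SBP operator is $$\hat Q_{i,m}=\frac12\begin{bmatrix}\hat Q_i-\hat Q_i^T & E^T\hat B_{i,f} & 0\\ -\hat B_{i,f}E & 0 & \hat B_{i,f}E_{fm}\\ 0 & -\hat B_{i,m}E_{mf} & \hat B_{i,m}\end{bmatrix}$$ (blocks indexed by volume, face, mortar nodes). $Q^{N_1,\dots,N_k}$ denotes tensor-product polynomials of degree at most $N_j$ in the $j$-th variable, $Q^M=Q^{M,\dots,M}$; "face (resp. mortar) quadrature exact for $Q^{M}$" means on each face it integrates every polynomial in $Q^{M}$ of the $d-1$ face coordinates exactly. The polynomials $g_{ij}$ play the role of scaled geometric terms $J\,\partial\hat x_j/\partial x_i$ of an element mapping. $\mathbf g_{ij}=[g_{ij}(\hat{\mathbf x});g_{ij}(\hat{\mathbf x}_f);g_{ij}(\hat{\mathbf x}_m)]$ is the vector of values of $g_{ij}$ at volume, face and mortar nodes, and the physical operator is $$Q_{i,m}=\frac12\sum_{j=1}^d\Big(\mathrm{diag}(\mathbf g_{ij})\hat Q_{j,m}+\hat Q_{j,m}\mathrm{diag}(\mathbf g_{ij})\Big).$$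 The scaled physical normals at mortar nodes are $\mathbf n_{i,m}=\sum_{j=1}^d g_{ij}(\hat{\mathbf x}_m)\circ\hat{\mathbf n}_{j,m}$ (entrywise product), and $B_{i,m}=\mathrm{diag}(\mathbf n_{i,m})\hat M_m$. (In 2D, case (b) with $d=2$ is the situation of isoparametric quadrilaterals, $g_{i1}\in Q^{N_{\rm geo},N_{\rm geo}-1}$, $g_{i2}\in Q^{N_{\rm geo}-1,N_{\rm geo}}$.) *)

theory Defs
  imports "HOL-Analysis.Analysis" "HOL-Computational_Algebra.Polynomial"
begin

(* Conventions: all indices are 0-based.  Spatial directions are 0..d-1,
   1D nodes/weights are x 0 .. x N, w 0 .. w N.  Points of R^d are
   functions nat => real (only coordinates 0..d-1 matter). *)

definition quad_exact_1d :: "nat \<Rightarrow> (nat \<Rightarrow> real) \<Rightarrow> (nat \<Rightarrow> real) \<Rightarrow> nat \<Rightarrow> bool" where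
  "quad_exact_1d N x w D \<longleftrightarrow>
     (\<forall>p :: real poly. degree p \<le> D \<longrightarrow>
        (\<Sum>j\<le>N. w j * poly p (x j)) = integral {-1..1} (poly p))"

definition gauss_legendre :: "nat \<Rightarrow> (nat \<Rightarrow> real) \<Rightarrow> (nat \<Rightarrow> real) \<Rightarrow> bool" where
  "gauss_legendre N x w \<longleftrightarrow>
     strict_mono_on {..N} x \<and> (\<forall>j\<le>N. -1 \<le> x j \<and> x j \<le> 1 \<and> 0 < w j) \<and>
     quad_exact_1d N x w (2*N+1)"

definition gauss_lobatto :: "nat \<Rightarrow> (nat \<Rightarrow> real) \<Rightarrow> (nat \<Rightarrow> real) \<Rightarrow> bool" where
  "gauss_lobatto N x w \<longleftrightarrow>
     strict_mono_on {..N} x \<and> x 0 = -1 \<and> x N = 1 \<and>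
     (\<forall>j\<le>N. -1 \<le> x j \<and> x j \<le> 1 \<and> 0 < w j) \<and>
     quad_exact_1d N x w (2*N-1)"

definition lagr :: "(nat \<Rightarrow> real) \<Rightarrow> nat \<Rightarrow> nat \<Rightarrow> real poly" where
  "lagr x N k = smult (1 / (\<Prod>m\<in>{..N}-{k}. (x k - x m))) (\<Prod>m\<in>{..N}-{k}. [:- x m, 1:])"

definition Q1D :: "(nat \<Rightarrow> real) \<Rightarrow> (nat \<Rightarrow> real) \<Rightarrow> nat \<Rightarrow> nat \<Rightarrow> nat \<Rightarrow> real" where
  "Q1D x w N j k = w j * poly (pderiv (lagr x N k)) (x j)"

definition tpoly :: "nat \<Rightarrow> (nat \<Rightarrow> nat) \<Rightarrow> ((nat \<Rightarrow> real) \<Rightarrow> real) set" where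
  "tpoly d degs = {f. \<exists>c :: (nat \<Rightarrow> nat) \<Rightarrow> real. \<forall>y.
      f y = (\<Sum>\<alpha>\<in>PiE {..<d} (\<lambda>i. {..degs i}). c \<alpha> * (\<Prod>i<d. y i ^ \<alpha> i))}"

fun iint :: "nat list \<Rightarrow> ((nat \<Rightarrow> real) \<Rightarrow> real) \<Rightarrow> (nat \<Rightarrow> real) \<Rightarrow> real" where
  "iint [] q y = q y"
| "iint (i # is) q y = integral {-1..1} (\<lambda>t. iint is q (y(i := t)))"

definition sgnb :: "bool \<Rightarrow> real" where
  "sgnb s = (if s then 1 else -1)"

definition face_integral :: "nat \<Rightarrow> nat \<Rightarrow> bool \<Rightarrow> ((nat \<Rightarrow> real) \<Rightarrow> real) \<Rightarrow> real" where
  "face_integral d k s q = iint (filter (\<lambda>i. i \<noteq> k) [0..<d]) q (\<lambda>i. if i = k then sgnb s else 0)"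

definition face_quad_exact :: "nat \<Rightarrow> nat \<Rightarrow> bool \<Rightarrow> nat \<Rightarrow> 'a set \<Rightarrow> ('a \<Rightarrow> nat \<Rightarrow> real) \<Rightarrow> ('a \<Rightarrow> real) \<Rightarrow> bool" where
  "face_quad_exact d k s M S pt wt \<longleftrightarrow>
     (\<forall>q \<in> tpoly d ((\<lambda>_. M)(k := 0)). (\<Sum>p\<in>S. wt p * q (pt p)) = face_integral d k s q)"

(* V a: volume node with multi-index a (a i \<le> N for i < d);
   F k s b: face node on face {x_k = sgnb s}, multi-index b on the other coordinates;
   M k s j: j-th mortar node on face {x_k = sgnb s} *)
datatype hnode = V "nat \<Rightarrow> nat" | F nat bool "nat \<Rightarrow> nat" | M nat bool nat

definition Vset :: "nat \<Rightarrow> nat \<Rightarrow> hnode set" where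
  "Vset d N = V ` PiE {..<d} (\<lambda>_. {..N})"

definition Fset_face :: "nat \<Rightarrow> nat \<Rightarrow> nat \<Rightarrow> bool \<Rightarrow> hnode set" where
  "Fset_face d N k s = F k s ` PiE ({..<d} - {k}) (\<lambda>_. {..N})"

definition Fset :: "nat \<Rightarrow> nat \<Rightarrow> hnode set" where
  "Fset d N = (\<Union>k<d. \<Union>s. Fset_face d N k s)"

definition Mset_face :: "(nat \<Rightarrow> bool \<Rightarrow> nat) \<Rightarrow> nat \<Rightarrow> bool \<Rightarrow> hnode set" where
  "Mset_face nm k s = M k s ` {..<nm k s}"

definition Mset :: "nat \<Rightarrow> (nat \<Rightarrow> bool \<Rightarrow> nat) \<Rightarrow> hnode set" where
  "Mset d nm = (\<Union>k<d. \<Union>s. Mset_face nm k s)"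

definition allnodes :: "nat \<Rightarrow> nat \<Rightarrow> (nat \<Rightarrow> bool \<Rightarrow> nat) \<Rightarrow> hnode set" where
  "allnodes d N nm = Vset d N \<union> Fset d N \<union> Mset d nm"

definition is_mortar :: "hnode \<Rightarrow> bool" where
  "is_mortar p = (case p of M _ _ _ \<Rightarrow> True | _ \<Rightarrow> False)"

fun pt :: "(nat \<Rightarrow> real) \<Rightarrow> (nat \<Rightarrow> bool \<Rightarrow> nat \<Rightarrow> nat \<Rightarrow> real) \<Rightarrow> hnode \<Rightarrow> nat \<Rightarrow> real" where
  "pt x xm (V a) = (\<lambda>i. x (a i))"
| "pt x xm (F k s b) = (\<lambda>i. if i = k then sgnb s else x (b i))"
| "pt x xm (M k s j) = xm k s j"

fun wt :: "nat \<Rightarrow> (nat \<Rightarrow> real) \<Rightarrow> (nat \<Rightarrow> bool \<Rightarrow> nat \<Rightarrow> real) \<Rightarrow> hnode \<Rightarrow> real" where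
  "wt d w wm (V a) = (\<Prod>i<d. w (a i))"
| "wt d w wm (F k s b) = (\<Prod>i\<in>{..<d}-{k}. w (b i))"
| "wt d w wm (M k s j) = wm k s j"

fun nhat :: "nat \<Rightarrow> hnode \<Rightarrow> real" where
  "nhat j (V a) = 0"
| "nhat j (F k s b) = (if j = k then sgnb s else 0)"
| "nhat j (M k s m) = (if j = k then sgnb s else 0)"

definition Qvol :: "nat \<Rightarrow> (nat \<Rightarrow> real) \<Rightarrow> (nat \<Rightarrow> real) \<Rightarrow> nat \<Rightarrow> nat \<Rightarrow> (nat \<Rightarrow> nat) \<Rightarrow> (nat \<Rightarrow> nat) \<Rightarrow> real" where
  "Qvol d x w N i a b = (\<Prod>k<d. if k = i then Q1D x w N (a k) (b k)
                                   else (if a k = b k then w (a k) else 0))"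

(* E_fm = Mhat_f^{-1} E_mf^T Mhat_m, entry (face node fn, mortar node mn) *)
definition Efm :: "nat \<Rightarrow> (nat \<Rightarrow> real) \<Rightarrow> (nat \<Rightarrow> bool \<Rightarrow> nat \<Rightarrow> real) \<Rightarrow> (hnode \<Rightarrow> hnode \<Rightarrow> real) \<Rightarrow> hnode \<Rightarrow> hnode \<Rightarrow> real" where
  "Efm d w wm Emf fn mn = (1 / wt d w wm fn) * Emf mn fn * wt d w wm mn"

fun Qhm :: "nat \<Rightarrow> nat \<Rightarrow> (nat \<Rightarrow> real) \<Rightarrow> (nat \<Rightarrow> real) \<Rightarrow> (nat \<Rightarrow> bool \<Rightarrow> nat \<Rightarrow> real)
            \<Rightarrow> (hnode \<Rightarrow> hnode \<Rightarrow> real) \<Rightarrow> (hnode \<Rightarrow> hnode \<Rightarrow> real) \<Rightarrow> nat \<Rightarrow> hnode \<Rightarrow> hnode \<Rightarrow> real" where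
  "Qhm d N x w wm E Emf j (V a) (V b) = (Qvol d x w N j a b - Qvol d x w N j b a) / 2"
| "Qhm d N x w wm E Emf j (V a) (F k s b) =
     E (F k s b) (V a) * nhat j (F k s b) * wt d w wm (F k s b) / 2"
| "Qhm d N x w wm E Emf j (V a) (M k s m) = 0"
| "Qhm d N x w wm E Emf j (F k s b) (V a) =
     - (nhat j (F k s b) * wt d w wm (F k s b) * E (F k s b) (V a)) / 2"
| "Qhm d N x w wm E Emf j (F k s b) (F k' s' b') = 0"
| "Qhm d N x w wm E Emf j (F k s b) (M k' s' m) =
     nhat j (F k s b) * wt d w wm (F k s b) * Efm d w wm Emf (F k s b) (M k' s' m) / 2"
| "Qhm d N x w wm E Emf j (M k s m) (V a) = 0"
| "Qhm d N x w wm E Emf j (M k s m) (F k' s' b) =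
     - (nhat j (M k s m) * wt d w wm (M k s m) * Emf (M k s m) (F k' s' b)) / 2"
| "Qhm d N x w wm E Emf j (M k s m) (M k' s' m') =
     (if (k, s, m) = (k', s', m') then nhat j (M k s m) * wt d w wm (M k s m) else 0) / 2"

definition Qphys :: "nat \<Rightarrow> nat \<Rightarrow> (nat \<Rightarrow> real) \<Rightarrow> (nat \<Rightarrow> real) \<Rightarrow> (nat \<Rightarrow> bool \<Rightarrow> nat \<Rightarrow> nat \<Rightarrow> real)
     \<Rightarrow> (nat \<Rightarrow> bool \<Rightarrow> nat \<Rightarrow> real) \<Rightarrow> (hnode \<Rightarrow> hnode \<Rightarrow> real) \<Rightarrow> (hnode \<Rightarrow> hnode \<Rightarrow> real)
     \<Rightarrow> (nat \<Rightarrow> nat \<Rightarrow> (nat \<Rightarrow> real) \<Rightarrow> real) \<Rightarrow> nat \<Rightarrow> hnode \<Rightarrow> hnode \<Rightarrow> real" where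
  "Qphys d N x w xm wm E Emf g i p q =
     (\<Sum>j<d. g i j (pt x xm p) * Qhm d N x w wm E Emf j p q
            + Qhm d N x w wm E Emf j p q * g i j (pt x xm q)) / 2"

definition nphys :: "nat \<Rightarrow> (nat \<Rightarrow> real) \<Rightarrow> (nat \<Rightarrow> bool \<Rightarrow> nat \<Rightarrow> nat \<Rightarrow> real)
     \<Rightarrow> (nat \<Rightarrow> nat \<Rightarrow> (nat \<Rightarrow> real) \<Rightarrow> real) \<Rightarrow> nat \<Rightarrow> hnode \<Rightarrow> real" where
  "nphys d x xm g i p = (\<Sum>j<d. g i j (pt x xm p) * nhat j p)"

definition pderiv_at :: "((nat \<Rightarrow> real) \<Rightarrow> real) \<Rightarrow> nat \<Rightarrow> (nat \<Rightarrow> real) \<Rightarrow> real" where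
  "pderiv_at f j y = deriv (\<lambda>t. f (y(j := t))) (y j)"

end

theory Submission
  imports Defs
begin

text \<open>
  The symmetric part of \<open>Q\<^sub>j\<^sub>,\<^sub>m\<close> is
  \<open>diag(0, 0, B\<^sub>j\<^sub>,\<^sub>m)\<close> by its block structure, once \<open>E\<^sub>f\<^sub>m = M\<^sub>f\<^sup>-\<^sup>1 E\<^sub>m\<^sub>f\<^sup>T M\<^sub>m\<close> and the
  block-diagonality of \<open>E\<^sub>m\<^sub>f\<close> are used; the symmetric part of the physical operator is that
  of \<open>Q\<^sub>j\<^sub>,\<^sub>m\<close> weighted by \<open>(g\<^sub>i\<^sub>j(p) + g\<^sub>i\<^sub>j(q))/2\<close>, which gives \<open>B\<^sub>i\<^sub>,\<^sub>m\<close>.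

  For the row sums write \<open>2 Q\<^sub>i\<^sub>,\<^sub>m 1 = \<Sum>\<^sub>j (diag(g\<^sub>i\<^sub>j) Q\<^sub>j\<^sub>,\<^sub>m 1 + Q\<^sub>j\<^sub>,\<^sub>m g\<^sub>i\<^sub>j)\<close> and apply
  \<open>Q\<^sub>j\<^sub>,\<^sub>m\<close> to \<open>u \<in> Q\<^sup>N\<close>.  On a volume node the result is \<open>M \<partial>\<^sub>j u\<close>: this is the
  one-dimensional SBP property of \<open>Q\<^sub>1\<^sub>D\<close> along the line through the node, whose boundary
  terms cancel against the face coupling \<open>E\<^sup>T B\<^sub>f\<close>.  On a mortar node it vanishes because
  \<open>E\<^sub>m\<^sub>f\<close> interpolates exactly.  On a node of the face \<open>x\<^sub>k = \<plusminus>1\<close> it vanishes for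
  \<open>j \<noteq> k\<close> (the normal has no \<open>j\<close>-component) and, for \<open>j = k\<close>, as soon as the trace of \<open>u\<close>
  on the face has degree at most \<open>D \<le> min(N\<^sub>f, N\<^sub>m)\<close>: then both face rules integrate the
  product of that trace with a face Lagrange polynomial exactly.  Hypotheses (a) and (b)
  guarantee this for \<open>u = g\<^sub>i\<^sub>k\<close> with \<open>D = N\<^sub>g\<^sub>e\<^sub>o\<close> resp. \<open>D = N\<^sub>g\<^sub>e\<^sub>o - 1\<close>, and the
  volume contributions add up to \<open>M \<Sum>\<^sub>j \<partial>\<^sub>j g\<^sub>i\<^sub>j = 0\<close> by the geometric conservation law.
\<close>

section \<open>Tensor-product polynomials\<close>

definition multi_monom :: "nat \<Rightarrow> (nat \<Rightarrow> nat) \<Rightarrow> (nat \<Rightarrow> real) \<Rightarrow> real" where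
  "multi_monom d \<alpha> y = (\<Prod>i<d. y i ^ \<alpha> i)"

lemma tpoly_iff_multi_monom:
  "f \<in> tpoly d degs \<longleftrightarrow>
     (\<exists>c. \<forall>y. f y = (\<Sum>\<alpha>\<in>PiE {..<d} (\<lambda>i. {..degs i}). c \<alpha> * multi_monom d \<alpha> y))"
  by (simp add: tpoly_def multi_monom_def)

lemma finite_multi_indices: "finite (PiE {..<d::nat} (\<lambda>i. {..degs i :: nat}))"
  by (simp add: finite_PiE)

lemma tpoly_zero: "(\<lambda>y. 0) \<in> tpoly d degs"
  unfolding tpoly_iff_multi_monom by (rule exI[of _ "\<lambda>_. 0"]) simp

lemma tpoly_add:
  assumes "f \<in> tpoly d degs" "g \<in> tpoly d degs"
  shows "(\<lambda>y. f y + g y) \<in> tpoly d degs"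
proof -
  obtain c c' where
    "\<forall>y. f y = (\<Sum>\<alpha>\<in>PiE {..<d} (\<lambda>i. {..degs i}). c \<alpha> * multi_monom d \<alpha> y)"
    "\<forall>y. g y = (\<Sum>\<alpha>\<in>PiE {..<d} (\<lambda>i. {..degs i}). c' \<alpha> * multi_monom d \<alpha> y)"
    using assms by (auto simp: tpoly_iff_multi_monom)
  then show ?thesis unfolding tpoly_iff_multi_monom
    by (intro exI[of _ "\<lambda>\<alpha>. c \<alpha> + c' \<alpha>"]) (simp add: sum.distrib distrib_right)
qed

lemma tpoly_cmult:
  assumes "f \<in> tpoly d degs"
  shows "(\<lambda>y. a * f y) \<in> tpoly d degs"
proof -
  obtain c where "\<forall>y. f y = (\<Sum>\<alpha>\<in>PiE {..<d} (\<lambda>i. {..degs i}). c \<alpha> * multi_monom d \<alpha> y)"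
    using assms by (auto simp: tpoly_iff_multi_monom)
  then show ?thesis unfolding tpoly_iff_multi_monom
    by (intro exI[of _ "\<lambda>\<alpha>. a * c \<alpha>"]) (simp add: sum_distrib_left mult.assoc)
qed

lemma tpoly_sum:
  assumes "\<And>i. i \<in> I \<Longrightarrow> f i \<in> tpoly d degs"
  shows "(\<lambda>y. \<Sum>i\<in>I. f i y) \<in> tpoly d degs"
  using assms
proof (induction I rule: infinite_finite_induct)
  case (insert a F)
  have "(\<lambda>y. f a y + (\<Sum>i\<in>F. f i y)) \<in> tpoly d degs"
    using insert by (intro tpoly_add) auto
  with insert show ?case by simp
qed (simp_all add: tpoly_zero)

lemma tpoly_multi_monom:
  assumes "\<And>i. i < d \<Longrightarrow> \<alpha> i \<le> degs i"
  shows "multi_monom d \<alpha> \<in> tpoly d degs"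
proof -
  let ?A = "PiE {..<d} (\<lambda>i. {..degs i})"
  let ?\<beta> = "restrict \<alpha> {..<d}"
  have \<beta>: "?\<beta> \<in> ?A" using assms by auto
  have "(\<Sum>\<gamma>\<in>?A. (if \<gamma> = ?\<beta> then 1 else 0) * multi_monom d \<gamma> y)
      = (\<Sum>\<gamma>\<in>?A. if \<gamma> = ?\<beta> then multi_monom d \<gamma> y else 0)" for y
    by (intro sum.cong) auto
  also have "\<dots> y = multi_monom d \<alpha> y" for y
    using \<beta> finite_multi_indices[of d degs] by (simp add: multi_monom_def)
  finally have "multi_monom d \<alpha> y = (\<Sum>\<gamma>\<in>?A. (if \<gamma> = ?\<beta> then 1 else 0) * multi_monom d \<gamma> y)" for y
    by simp
  then show ?thesis unfolding tpoly_iff_multi_monom by (intro exI[of _ "\<lambda>\<gamma>. if \<gamma> = ?\<beta> then 1 else 0"]) blast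
qed

lemma tpoly_const: "(\<lambda>y. a) \<in> tpoly d degs"
proof -
  have "(\<lambda>y. a * multi_monom d (\<lambda>_. 0) y) \<in> tpoly d degs"
    by (intro tpoly_cmult tpoly_multi_monom) simp
  then show ?thesis by (simp add: multi_monom_def)
qed

lemma tpoly_mono_degree:
  assumes f: "f \<in> tpoly d degs" and le: "\<And>i. i < d \<Longrightarrow> degs i \<le> degs' i"
  shows "f \<in> tpoly d degs'"
proof -
  obtain c where c: "\<forall>y. f y = (\<Sum>\<alpha>\<in>PiE {..<d} (\<lambda>i. {..degs i}). c \<alpha> * multi_monom d \<alpha> y)"
    using f by (auto simp: tpoly_iff_multi_monom)
  have "(\<lambda>y. \<Sum>\<alpha>\<in>PiE {..<d} (\<lambda>i. {..degs i}). c \<alpha> * multi_monom d \<alpha> y) \<in> tpoly d degs'"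
    using le by (intro tpoly_sum tpoly_cmult tpoly_multi_monom) (force simp: PiE_iff)
  moreover have "f = (\<lambda>y. \<Sum>\<alpha>\<in>PiE {..<d} (\<lambda>i. {..degs i}). c \<alpha> * multi_monom d \<alpha> y)"
    using c by auto
  ultimately show ?thesis by simp
qed

lemma tpoly_mult:
  assumes f: "f \<in> tpoly d D1" and g: "g \<in> tpoly d D2"
  shows "(\<lambda>y. f y * g y) \<in> tpoly d (\<lambda>i. D1 i + D2 i)"
proof -
  obtain c c' where
    c: "\<forall>y. f y = (\<Sum>\<alpha>\<in>PiE {..<d} (\<lambda>i. {..D1 i}). c \<alpha> * multi_monom d \<alpha> y)" and
    c': "\<forall>y. g y = (\<Sum>\<beta>\<in>PiE {..<d} (\<lambda>i. {..D2 i}). c' \<beta> * multi_monom d \<beta> y)"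
    using f g by (auto simp: tpoly_iff_multi_monom)
  have "f y * g y = (\<Sum>\<alpha>\<in>PiE {..<d} (\<lambda>i. {..D1 i}). \<Sum>\<beta>\<in>PiE {..<d} (\<lambda>i. {..D2 i}).
          (c \<alpha> * c' \<beta>) * multi_monom d (\<lambda>i. \<alpha> i + \<beta> i) y)" for y
    unfolding c[rule_format] c'[rule_format] sum_product
    by (simp add: multi_monom_def power_add prod.distrib mult_ac)
  moreover have "(\<lambda>y. \<Sum>\<alpha>\<in>PiE {..<d} (\<lambda>i. {..D1 i}). \<Sum>\<beta>\<in>PiE {..<d} (\<lambda>i. {..D2 i}).
          (c \<alpha> * c' \<beta>) * multi_monom d (\<lambda>i. \<alpha> i + \<beta> i) y) \<in> tpoly d (\<lambda>i. D1 i + D2 i)"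
    by (intro tpoly_sum tpoly_cmult tpoly_multi_monom) (auto simp: PiE_iff add_mono)
  ultimately show ?thesis by simp
qed

lemma tpoly_prod:
  assumes "\<And>i. i \<in> I \<Longrightarrow> f i \<in> tpoly d (D i)"
  shows "(\<lambda>y. \<Prod>i\<in>I. f i y) \<in> tpoly d (\<lambda>k. \<Sum>i\<in>I. D i k)"
  using assms
proof (induction I rule: infinite_finite_induct)
  case (insert a F)
  have "(\<lambda>y. f a y * (\<Prod>i\<in>F. f i y)) \<in> tpoly d (\<lambda>k. D a k + (\<Sum>i\<in>F. D i k))"
    using insert by (intro tpoly_mult) auto
  with insert show ?case by simp
qed (simp_all add: tpoly_const)

lemma multi_monom_fun_upd:
  assumes "k < d"
  shows "multi_monom d \<alpha> (y(k := t)) = t ^ \<alpha> k * multi_monom d (\<alpha>(k := 0)) y"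
proof -
  have k: "k \<in> {..<d}" using assms by simp
  have "multi_monom d \<alpha> (y(k := t)) = t ^ \<alpha> k * (\<Prod>i\<in>{..<d}-{k}. y i ^ \<alpha> i)"
    unfolding multi_monom_def by (simp add: prod.remove[OF _ k])
  also have "(\<Prod>i\<in>{..<d}-{k}. y i ^ \<alpha> i) = multi_monom d (\<alpha>(k := 0)) y"
    unfolding multi_monom_def by (simp add: prod.remove[OF _ k])
  finally show ?thesis .
qed

lemma tpoly_fix_coordinate:
  assumes f: "f \<in> tpoly d degs" and k: "k < d"
  shows "(\<lambda>y. f (y(k := t))) \<in> tpoly d (degs(k := 0))"
proof -
  obtain c where c: "\<forall>y. f y = (\<Sum>\<alpha>\<in>PiE {..<d} (\<lambda>i. {..degs i}). c \<alpha> * multi_monom d \<alpha> y)"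
    using f by (auto simp: tpoly_iff_multi_monom)
  have "(\<lambda>y. \<Sum>\<alpha>\<in>PiE {..<d} (\<lambda>i. {..degs i}). (c \<alpha> * t ^ \<alpha> k) * multi_monom d (\<alpha>(k := 0)) y)
          \<in> tpoly d (degs(k := 0))"
    by (intro tpoly_sum tpoly_cmult tpoly_multi_monom) (auto simp: PiE_iff)
  then show ?thesis by (simp add: c multi_monom_fun_upd[OF k] mult.assoc)
qed

lemma tpoly_univariate:
  assumes "degree p \<le> D" "j < d"
  shows "(\<lambda>y. poly p (y j)) \<in> tpoly d ((\<lambda>_. 0)(j := D))"
proof -
  have "y j ^ n = multi_monom d ((\<lambda>_. 0)(j := n)) y" for y n
  proof -
    have "multi_monom d ((\<lambda>_. 0)(j := n)) y = (\<Prod>i<d. if i = j then y j ^ n else 1)"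
      unfolding multi_monom_def by (intro prod.cong) auto
    with \<open>j < d\<close> show ?thesis by simp
  qed
  then have "poly p (y j) = (\<Sum>n\<le>degree p. coeff p n * multi_monom d ((\<lambda>_. 0)(j := n)) y)" for y
    by (simp add: poly_altdef)
  moreover have "(\<lambda>y. \<Sum>n\<le>degree p. coeff p n * multi_monom d ((\<lambda>_. 0)(j := n)) y)
      \<in> tpoly d ((\<lambda>_. 0)(j := D))"
    using assms by (intro tpoly_sum tpoly_cmult tpoly_multi_monom) auto
  ultimately show ?thesis by simp
qed

lemma tpoly_restrict_line:
  assumes f: "f \<in> tpoly d degs" and j: "j < d"
  obtains p where "degree p \<le> degs j" "\<And>t. f (y(j := t)) = poly p t"
proof -
  obtain c where c: "\<forall>y. f y = (\<Sum>\<alpha>\<in>PiE {..<d} (\<lambda>i. {..degs i}). c \<alpha> * multi_monom d \<alpha> y)"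
    using f by (auto simp: tpoly_iff_multi_monom)
  define p where "p = (\<Sum>\<alpha>\<in>PiE {..<d} (\<lambda>i. {..degs i}).
      monom (c \<alpha> * multi_monom d (\<alpha>(j := 0)) y) (\<alpha> j))"
  have "degree p \<le> degs j" unfolding p_def
    using j by (intro degree_sum_le finite_multi_indices) (auto simp: PiE_iff intro: order.trans[OF degree_monom_le])
  moreover have "f (y(j := t)) = poly p t" for t
    by (simp add: c p_def poly_sum poly_monom multi_monom_fun_upd[OF j] algebra_simps)
  ultimately show thesis using that by blast
qed

lemma tpoly_trace:
  assumes f: "f \<in> tpoly d degs" and k: "k < d" and le: "\<And>i. i < d \<Longrightarrow> i \<noteq> k \<Longrightarrow> degs i \<le> D"
  shows "(\<lambda>y. f (y(k := t))) \<in> tpoly d ((\<lambda>_. D)(k := 0))"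
  using le by (intro tpoly_mono_degree[OF tpoly_fix_coordinate[OF f k]]) auto

section \<open>Lagrange interpolation and the one-dimensional SBP property\<close>

lemma poly_lagr_node:
  assumes inj: "inj_on x {..N}" and "k \<le> N" "n \<le> N"
  shows "poly (lagr x N k) (x n) = (if n = k then 1 else 0)"
proof (cases "n = k")
  case True
  have "(\<Prod>m\<in>{..N}-{k}. (x k - x m)) \<noteq> 0"
    using assms by (auto simp: inj_on_def)
  with True show ?thesis by (simp add: lagr_def poly_prod)
next
  case False
  then have "(\<Prod>m\<in>{..N}-{k}. poly [:- x m, 1:] (x n)) = 0"
    using assms by (intro prod_zero) (auto intro!: bexI[of _ n])
  with False show ?thesis by (simp add: lagr_def poly_prod)
qed

lemma prod_poly_lagr_nodes:
  assumes inj: "inj_on x {..N}" and "finite I"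
    and a: "a \<in> PiE I (\<lambda>_. {..N})" and b: "b \<in> PiE I (\<lambda>_. {..N})"
  shows "(\<Prod>i\<in>I. poly (lagr x N (a i)) (x (b i))) = (if b = a then 1 else 0)"
proof -
  have "(\<Prod>i\<in>I. poly (lagr x N (a i)) (x (b i))) = (\<Prod>i\<in>I. if b i = a i then 1 else 0)"
  proof (intro prod.cong)
    fix i assume "i \<in> I"
    then have "a i \<le> N" "b i \<le> N" using a b by auto
    then show "poly (lagr x N (a i)) (x (b i)) = (if b i = a i then 1 else 0)"
      by (simp add: poly_lagr_node[OF inj])
  qed simp
  also have "\<dots> = (if \<forall>i\<in>I. b i = a i then 1 else 0)"
    using \<open>finite I\<close> by (induction I rule: finite_induct) auto
  also have "(\<forall>i\<in>I. b i = a i) \<longleftrightarrow> b = a"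
    using a b by (auto simp: PiE_iff extensional_def fun_eq_iff)
  finally show ?thesis .
qed

lemma degree_lagr:
  assumes "k \<le> N"
  shows "degree (lagr x N k) \<le> N"
proof -
  have "degree (\<Prod>m\<in>{..N}-{k}. [:- x m, 1:]) \<le> (\<Sum>m\<in>{..N}-{k}. (degree \<circ> (\<lambda>m. [:- x m, 1:])) m)"
    by (rule degree_prod_sum_le) simp
  also have "\<dots> = N" using assms by simp
  finally show ?thesis unfolding lagr_def using degree_smult_le order.trans by blast
qed

lemma lagrange_interpolation:
  assumes inj: "inj_on x {..N}" and deg: "degree p \<le> N"
  shows "p = (\<Sum>m\<le>N. smult (poly p (x m)) (lagr x N m))"
proof (rule poly_eqI_degree[where A = "x ` {..N}"])
  fix t assume "t \<in> x ` {..N}"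
  then obtain n where n: "n \<le> N" "t = x n" by auto
  then have "poly (\<Sum>m\<le>N. smult (poly p (x m)) (lagr x N m)) t
      = (\<Sum>m\<le>N. if m = n then poly p (x m) else 0)"
    by (simp add: poly_sum poly_lagr_node[OF inj] if_distrib[of "(*) _"] cong: if_cong)
  with n show "poly p t = poly (\<Sum>m\<le>N. smult (poly p (x m)) (lagr x N m)) t"
    by simp
next
  have card: "card (x ` {..N}) = Suc N" using inj by (simp add: card_image)
  then show "degree p < card (x ` {..N})" using deg by simp
  have "degree (\<Sum>m\<le>N. smult (poly p (x m)) (lagr x N m)) \<le> N"
    by (intro degree_sum_le) (auto intro: order.trans[OF degree_smult_le] degree_lagr)
  with card show "degree (\<Sum>m\<le>N. smult (poly p (x m)) (lagr x N m)) < card (x ` {..N})"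
    by simp
qed

lemma integral_poly_pderiv:
  "integral {-1..1} (poly (pderiv q)) = poly q 1 - poly q (-1 :: real)"
proof -
  have "(poly (pderiv q) has_integral (poly q 1 - poly q (-1))) {-1..1::real}"
    by (rule fundamental_theorem_of_calculus)
       (auto simp: has_real_derivative_iff_has_vector_derivative[symmetric]
         intro: DERIV_subset[OF poly_DERIV])
  then show ?thesis by (rule integral_unique)
qed

lemma Q1D_apply:
  assumes inj: "inj_on x {..N}" and deg: "degree p \<le> N"
  shows "(\<Sum>m\<le>N. Q1D x w N j m * poly p (x m)) = w j * poly (pderiv p) (x j)"
proof -
  have "poly (pderiv p) (x j)
      = poly (pderiv (\<Sum>m\<le>N. smult (poly p (x m)) (lagr x N m))) (x j)"
    using lagrange_interpolation[OF inj deg] by simp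
  also have "\<dots> = (\<Sum>m\<le>N. poly p (x m) * poly (pderiv (lagr x N m)) (x j))"
    by (simp add: higher_pderiv_sum[of 1, simplified] poly_sum pderiv_smult)
  finally show ?thesis by (simp add: Q1D_def sum_distrib_left mult_ac)
qed

text \<open>Summation by parts: the quadrature integrates \<open>(\<ell>\<^sub>k p)'\<close> exactly.\<close>

lemma Q1D_transpose_apply:
  assumes inj: "inj_on x {..N}" and deg: "degree p \<le> N" and k: "k \<le> N"
    and quad: "quad_exact_1d N x w (2*N-1)"
  shows "(\<Sum>m\<le>N. Q1D x w N m k * poly p (x m))
     = poly (lagr x N k * p) 1 - poly (lagr x N k * p) (-1) - w k * poly (pderiv p) (x k)"
proof -
  let ?l = "lagr x N k"
  have "degree (?l * p) \<le> 2*N"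
    using degree_mult_le[of ?l p] degree_lagr[OF k, of x] deg by simp
  then have "degree (pderiv (?l * p)) \<le> 2*N-1" by (simp add: degree_pderiv)
  then have "(\<Sum>m\<le>N. w m * poly (pderiv (?l * p)) (x m)) = poly (?l * p) 1 - poly (?l * p) (-1)"
    using quad integral_poly_pderiv[of "?l * p"] unfolding quad_exact_1d_def by simp
  moreover have "(\<Sum>m\<le>N. w m * poly (pderiv (?l * p)) (x m))
      = (\<Sum>m\<le>N. Q1D x w N m k * poly p (x m)) + (\<Sum>m\<le>N. w m * poly ?l (x m) * poly (pderiv p) (x m))"
    by (simp add: pderiv_mult Q1D_def sum.distrib[symmetric] algebra_simps)
  moreover have "(\<Sum>m\<le>N. w m * poly ?l (x m) * poly (pderiv p) (x m))
      = (\<Sum>m\<le>N. if m = k then w m * poly (pderiv p) (x m) else 0)"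
    using k by (intro sum.cong) (auto simp: poly_lagr_node[OF inj])
  ultimately show ?thesis using k by simp
qed

lemma quad_exact_1d_mono:
  "quad_exact_1d N x w D \<Longrightarrow> D' \<le> D \<Longrightarrow> quad_exact_1d N x w D'"
  unfolding quad_exact_1d_def by auto

lemma gauss_rule_properties:
  assumes "gauss_legendre N x w \<or> gauss_lobatto N x w"
  shows "inj_on x {..N}" "\<forall>j\<le>N. -1 \<le> x j \<and> x j \<le> 1" "\<forall>j\<le>N. 0 < w j"
    "quad_exact_1d N x w (2*N-1)"
proof -
  have "strict_mono_on {..N} x" "\<forall>j\<le>N. -1 \<le> x j \<and> x j \<le> 1 \<and> 0 < w j"
    "quad_exact_1d N x w (2*N+1) \<or> quad_exact_1d N x w (2*N-1)"
    using assms by (auto simp: gauss_legendre_def gauss_lobatto_def)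
  then show "inj_on x {..N}" "\<forall>j\<le>N. -1 \<le> x j \<and> x j \<le> 1" "\<forall>j\<le>N. 0 < w j"
    "quad_exact_1d N x w (2*N-1)"
    using strict_mono_on_imp_inj_on quad_exact_1d_mono[of N x w "2*N+1" "2*N-1"] by auto
qed

lemma sum_kronecker_row:
  fixes A :: "nat \<Rightarrow> nat \<Rightarrow> real" and h :: "(nat \<Rightarrow> nat) \<Rightarrow> real"
  assumes a: "a \<in> PiE {..<d} (\<lambda>_. {..N})" and j: "j < d"
  shows "(\<Sum>b\<in>PiE {..<d} (\<lambda>_. {..N}).
            (\<Prod>k<d. if k = j then A (a k) (b k) else if a k = b k then w (a k) else 0) * h b)
       = (\<Prod>k\<in>{..<d}-{j}. w (a k)) * (\<Sum>m\<le>N. A (a j) m * h (a(j := m)))"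
proof -
  let ?I = "PiE {..<d} (\<lambda>_. {..N})"
  let ?G = "\<lambda>b. (\<Prod>k<d. if k = j then A (a k) (b k) else if a k = b k then w (a k) else 0) * h b"
  have line: "(\<lambda>m. a(j := m)) ` {..N} \<subseteq> ?I"
    using a j by (auto simp: PiE_iff extensional_def split: if_split_asm)
  have off_line: "?G b = 0" if b: "b \<in> ?I - (\<lambda>m. a(j := m)) ` {..N}" for b
  proof -
    have "b \<noteq> a(j := b j)" "b j \<le> N" using b j by auto
    then obtain k where "k < d" "k \<noteq> j" "b k \<noteq> a k"
      using a b by (auto simp: PiE_iff extensional_def fun_eq_iff) metis
    then show ?thesis by (auto intro!: prod_zero bexI[of _ k])
  qed
  have on_line: "?G (a(j := m)) = (\<Prod>k\<in>{..<d}-{j}. w (a k)) * (A (a j) m * h (a(j := m)))" for m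
  proof -
    have "(\<Prod>k\<in>{..<d}-{j}. if k = j then A (a k) ((a(j := m)) k)
            else if a k = (a(j := m)) k then w (a k) else 0) = (\<Prod>k\<in>{..<d}-{j}. w (a k))"
      by (intro prod.cong) auto
    with j show ?thesis by (simp add: prod.remove[of "{..<d}" j])
  qed
  have "sum ?G ?I = sum ?G ((\<lambda>m. a(j := m)) ` {..N})"
    using off_line by (intro sum.mono_neutral_right[OF finite_multi_indices line]) blast
  also have "\<dots> = (\<Sum>m\<le>N. ?G (a(j := m)))"
    by (intro sum.reindex_cong[where l = "\<lambda>m. a(j := m)"] inj_onI) (auto dest: fun_cong[of _ _ j])
  finally show ?thesis by (simp add: on_line sum_distrib_left)
qed

definition lagr_tensor :: "(nat \<Rightarrow> real) \<Rightarrow> nat \<Rightarrow> nat set \<Rightarrow> (nat \<Rightarrow> nat) \<Rightarrow> (nat \<Rightarrow> real) \<Rightarrow> real" where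
  "lagr_tensor x N I a y = (\<Prod>i\<in>I. poly (lagr x N (a i)) (y i))"

lemma tpoly_lagr_tensor:
  assumes "I \<subseteq> {..<d}" "a \<in> PiE I (\<lambda>_. {..N})"
  shows "lagr_tensor x N I a \<in> tpoly d (\<lambda>i. if i \<in> I then N else 0)"
proof -
  have "(\<lambda>y. \<Prod>i\<in>I. poly (lagr x N (a i)) (y i)) \<in> tpoly d (\<lambda>k. \<Sum>i\<in>I. ((\<lambda>_. 0)(i := N)) k)"
    using assms by (intro tpoly_prod tpoly_univariate degree_lagr) auto
  moreover have "(\<Sum>i\<in>I. ((\<lambda>_. 0)(i := N)) k) = (if k \<in> I then N else 0)" for k
    using finite_subset[OF assms(1)] by (auto simp: fun_upd_def)
  ultimately show ?thesis by (simp add: lagr_tensor_def[abs_def])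
qed

lemma lagr_tensor_node:
  assumes "inj_on x {..N}" "finite I" "a \<in> PiE I (\<lambda>_. {..N})" "b \<in> PiE I (\<lambda>_. {..N})"
    and "\<And>i. i \<in> I \<Longrightarrow> y i = x (b i)"
  shows "lagr_tensor x N I a y = (if b = a then 1 else 0)"
  using prod_poly_lagr_nodes[OF assms(1-4)] assms(5) by (simp add: lagr_tensor_def)

section \<open>The mortar-based hybridized operator\<close>

locale mortar_sbp =
  fixes d N Nf Nm :: nat
    and x w :: "nat \<Rightarrow> real"
    and nm :: "nat \<Rightarrow> bool \<Rightarrow> nat"
    and xm :: "nat \<Rightarrow> bool \<Rightarrow> nat \<Rightarrow> nat \<Rightarrow> real"
    and wm :: "nat \<Rightarrow> bool \<Rightarrow> nat \<Rightarrow> real"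
    and E Emf :: "hnode \<Rightarrow> hnode \<Rightarrow> real"
  assumes nodes_inj: "inj_on x {..N}"
    and nodes_bounded: "\<forall>j\<le>N. -1 \<le> x j \<and> x j \<le> 1"
    and weights_pos: "\<forall>j\<le>N. 0 < w j"
    and quad_exact: "quad_exact_1d N x w (2*N-1)"
    and E_interp: "\<forall>f \<in> tpoly d (\<lambda>_. N). \<forall>fn \<in> Fset d N.
               (\<Sum>a\<in>Vset d N. E fn a * f (pt x xm a)) = f (pt x xm fn)"
    and mortar_on_face: "\<forall>k<d. \<forall>s. \<forall>j<nm k s. xm k s j k = sgnb s \<and>
               (\<forall>i<d. -1 \<le> xm k s j i \<and> xm k s j i \<le> 1)"
    and Emf_block: "\<forall>mn \<in> Mset d nm. \<forall>fn \<in> Fset d N.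
               (case (mn, fn) of (M k s _, F k' s' _) \<Rightarrow> (k, s) \<noteq> (k', s') \<longrightarrow> Emf mn fn = 0
                                | _ \<Rightarrow> True)"
    and Emf_interp: "\<forall>k<d. \<forall>s. \<forall>q \<in> tpoly d ((\<lambda>_. N)(k := 0)). \<forall>mn \<in> Mset_face nm k s.
               (\<Sum>fn\<in>Fset_face d N k s. Emf mn fn * q (pt x xm fn)) = q (pt x xm mn)"
    and face_exact: "\<forall>k<d. \<forall>s. face_quad_exact d k s (N + Nf) (Fset_face d N k s) (pt x xm) (wt d w wm)"
    and mortar_exact: "\<forall>k<d. \<forall>s. face_quad_exact d k s (N + Nm) (Mset_face nm k s) (pt x xm) (wt d w wm)"
begin

text \<open>\<open>X p\<close> are the coordinates of node \<open>p\<close>, \<open>W p\<close> its entry in \<open>M\<close>, \<open>M\<^sub>f\<close> or \<open>M\<^sub>m\<close>, and \<open>Qh j\<close>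
  is \<open>Q\<^sub>j\<^sub>,\<^sub>m\<close>; multi-indices of volume and face nodes range over \<open>Ivol\<close> and \<open>Iface k\<close>.\<close>

abbreviation "X \<equiv> pt x xm"
abbreviation "W \<equiv> wt d w wm"
abbreviation "Qh \<equiv> Qhm d N x w wm E Emf"
abbreviation "Ivol \<equiv> PiE {..<d} (\<lambda>_::nat. {..N})"
abbreviation "Iface k \<equiv> PiE ({..<d} - {k}) (\<lambda>_::nat. {..N})"

lemma node_set_simps [simp]:
  "V a \<in> Vset d N \<longleftrightarrow> a \<in> Ivol" "F k s b \<notin> Vset d N" "M k s m \<notin> Vset d N"
  "F k s b \<in> Fset d N \<longleftrightarrow> k < d \<and> b \<in> Iface k" "V a \<notin> Fset d N" "M k s m \<notin> Fset d N"
  "M k s m \<in> Mset d nm \<longleftrightarrow> k < d \<and> m < nm k s" "V a \<notin> Mset d nm" "F k s b \<notin> Mset d nm"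
  "F k' s' b \<in> Fset_face d N k s \<longleftrightarrow> k' = k \<and> s' = s \<and> b \<in> Iface k"
  "V a \<notin> Fset_face d N k s" "M k' s' m \<notin> Fset_face d N k s"
  "M k' s' m \<in> Mset_face nm k s \<longleftrightarrow> k' = k \<and> s' = s \<and> m < nm k s"
  "V a \<notin> Mset_face nm k s" "F k' s' b \<notin> Mset_face nm k s"
  by (auto simp: Vset_def Fset_def Fset_face_def Mset_def Mset_face_def)

lemma allnodes_simps [simp]:
  "V a \<in> allnodes d N nm \<longleftrightarrow> a \<in> Ivol"
  "F k s b \<in> allnodes d N nm \<longleftrightarrow> k < d \<and> b \<in> Iface k"
  "M k s m \<in> allnodes d N nm \<longleftrightarrow> k < d \<and> m < nm k s"
  by (simp_all add: allnodes_def)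

lemma finite_node_sets [simp]:
  "finite (Vset d N)" "finite (Fset_face d N k s)" "finite (Fset d N)"
  "finite (Mset_face nm k s)" "finite (Mset d nm)"
  by (simp_all add: Vset_def Fset_def Fset_face_def Mset_def Mset_face_def finite_PiE)

lemma sum_allnodes:
  "(\<Sum>q\<in>allnodes d N nm. f q) = (\<Sum>q\<in>Vset d N. f q) + (\<Sum>q\<in>Fset d N. f q) + (\<Sum>q\<in>Mset d nm. f q)"
proof -
  have "(Vset d N \<union> Fset d N) \<inter> Mset d nm = {}" "Vset d N \<inter> Fset d N = {}"
    by (auto simp: Vset_def Fset_def Fset_face_def Mset_def Mset_face_def)
  then show ?thesis unfolding allnodes_def by (simp add: sum.union_disjoint)
qed

lemma sum_Vset: "(\<Sum>q\<in>Vset d N. f q) = (\<Sum>a\<in>Ivol. f (V a))"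
  unfolding Vset_def by (simp add: sum.reindex inj_on_def)

lemma sum_Fset_face: "(\<Sum>q\<in>Fset_face d N k s. f q) = (\<Sum>b\<in>Iface k. f (F k s b))"
  unfolding Fset_face_def by (simp add: sum.reindex inj_on_def)

lemma face_weight_pos: "b \<in> Iface k \<Longrightarrow> W (F k s b) > 0"
  using weights_pos by (auto intro!: prod_pos simp: PiE_iff)

lemma Emf_off_block:
  assumes "M k' s' m \<in> Mset d nm" "F k s b \<in> Fset d N" "(k', s') \<noteq> (k, s)"
  shows "Emf (M k' s' m) (F k s b) = 0"
  using Emf_block[rule_format, OF assms(1,2)] assms(3) by simp

lemma sum_Mset_Emf_block:
  assumes k: "k < d" and b: "b \<in> Iface k"
  shows "(\<Sum>q\<in>Mset d nm. Emf q (F k s b) * h q) = (\<Sum>q\<in>Mset_face nm k s. Emf q (F k s b) * h q)"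
proof (rule sum.mono_neutral_right)
  show "Mset_face nm k s \<subseteq> Mset d nm" using k by (auto simp: Mset_def)
  show "\<forall>q\<in>Mset d nm - Mset_face nm k s. Emf q (F k s b) * h q = 0"
  proof
    fix q assume q: "q \<in> Mset d nm - Mset_face nm k s"
    then obtain k' s' m where q_eq: "q = M k' s' m" and "k' < d" "m < nm k' s'"
      by (auto simp: Mset_def Mset_face_def)
    have "(k', s') \<noteq> (k, s)"
    proof
      assume "(k', s') = (k, s)"
      with q q_eq \<open>m < nm k' s'\<close> show False by simp
    qed
    with \<open>k' < d\<close> \<open>m < nm k' s'\<close> k b have "Emf (M k' s' m) (F k s b) = 0"
      by (intro Emf_off_block) simp_all
    with q_eq show "Emf q (F k s b) * h q = 0" by simp
  qed
qed simp

lemma sum_Fset_Emf_block: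
  assumes k: "k < d" and m: "m < nm k s"
  shows "(\<Sum>q\<in>Fset d N. Emf (M k s m) q * h q) = (\<Sum>q\<in>Fset_face d N k s. Emf (M k s m) q * h q)"
proof (rule sum.mono_neutral_right)
  show "Fset_face d N k s \<subseteq> Fset d N" using k by (auto simp: Fset_def)
  show "\<forall>q\<in>Fset d N - Fset_face d N k s. Emf (M k s m) q * h q = 0"
  proof
    fix q assume q: "q \<in> Fset d N - Fset_face d N k s"
    then obtain k' s' b where q_eq: "q = F k' s' b" and "k' < d" "b \<in> Iface k'"
      by (auto simp: Fset_def Fset_face_def)
    have "(k, s) \<noteq> (k', s')"
    proof
      assume "(k, s) = (k', s')"
      with q q_eq \<open>b \<in> Iface k'\<close> show False by simp
    qed
    with \<open>k' < d\<close> \<open>b \<in> Iface k'\<close> k m have "Emf (M k s m) (F k' s' b) = 0"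
      by (intro Emf_off_block) simp_all
    with q_eq show "Emf (M k s m) q * h q = 0" by simp
  qed
qed simp

lemma Qhm_plus_transpose:
  assumes p: "p \<in> allnodes d N nm" and q: "q \<in> allnodes d N nm"
  shows "Qh j p q + Qh j q p = (if p = q \<and> is_mortar p then nhat j p * W p else 0)"
proof -
  have face_mortar: "Qh j (F k s b) (M k' s' m) + Qh j (M k' s' m) (F k s b) = 0"
    if "F k s b \<in> allnodes d N nm" "M k' s' m \<in> allnodes d N nm" for k s b k' s' m
  proof -
    have "W (F k s b) > 0" using that by (intro face_weight_pos) simp
    then have "W (F k s b) \<noteq> 0" by linarith
    moreover have "(k', s') \<noteq> (k, s) \<Longrightarrow> Emf (M k' s' m) (F k s b) = 0"
      using that by (intro Emf_off_block) simp_all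
    ultimately show ?thesis by (cases "(k', s') = (k, s)") (auto simp: Efm_def)
  qed
  show ?thesis
    using p q face_mortar
    by (cases p; cases q) (auto simp: is_mortar_def diff_divide_distrib)
qed

lemma Qphys_plus_transpose:
  assumes "p \<in> allnodes d N nm" "q \<in> allnodes d N nm"
  shows "Qphys d N x w xm wm E Emf g i p q + Qphys d N x w xm wm E Emf g i q p
       = (if p = q \<and> is_mortar p then nphys d x xm g i p * W p else 0)"
proof -
  have "Qphys d N x w xm wm E Emf g i p q + Qphys d N x w xm wm E Emf g i q p
      = (\<Sum>j<d. (g i j (X p) + g i j (X q)) * (Qh j p q + Qh j q p)) / 2"
    unfolding Qphys_def by (simp add: sum.distrib[symmetric] add_divide_distrib[symmetric] algebra_simps)
  also have "\<dots> = (\<Sum>j<d. (g i j (X p) + g i j (X q)) * (if p = q \<and> is_mortar p then nhat j p * W p else 0)) / 2"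
    using Qhm_plus_transpose[OF assms] by simp
  also have "\<dots> = (if p = q \<and> is_mortar p then nphys d x xm g i p * W p else 0)"
  proof (cases "p = q \<and> is_mortar p")
    case True
    then show ?thesis by (auto simp: nphys_def sum_distrib_right sum_divide_distrib intro!: sum.cong)
  qed (simp only: if_False mult_zero_right sum.neutral_const div_0)
  finally show ?thesis .
qed

definition Qh_apply :: "nat \<Rightarrow> hnode \<Rightarrow> ((nat \<Rightarrow> real) \<Rightarrow> real) \<Rightarrow> real" where
  "Qh_apply j p u = (\<Sum>q\<in>allnodes d N nm. Qh j p q * u (X q))"

lemma Qphys_row_sum:
  "(\<Sum>q\<in>allnodes d N nm. Qphys d N x w xm wm E Emf g i p q)
     = (\<Sum>j<d. g i j (X p) * Qh_apply j p (\<lambda>_. 1) + Qh_apply j p (g i j)) / 2"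
proof -
  have "(\<Sum>q\<in>allnodes d N nm. Qphys d N x w xm wm E Emf g i p q)
      = (\<Sum>j<d. \<Sum>q\<in>allnodes d N nm. g i j (X p) * Qh j p q + Qh j p q * g i j (X q)) / 2"
    unfolding Qphys_def by (simp add: sum_divide_distrib sum.swap[of _ "{..<d}"])
  then show ?thesis by (simp add: Qh_apply_def sum.distrib sum_distrib_left)
qed

lemma E_entry:
  assumes "q \<in> Fset d N" "a \<in> Ivol"
  shows "E q (V a) = lagr_tensor x N {..<d} a (X q)"
proof -
  have "lagr_tensor x N {..<d} a \<in> tpoly d (\<lambda>_. N)"
    using assms by (intro tpoly_mono_degree[OF tpoly_lagr_tensor]) auto
  then have "lagr_tensor x N {..<d} a (X q) = (\<Sum>b\<in>Ivol. E q (V b) * lagr_tensor x N {..<d} a (X (V b)))"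
    using E_interp assms by (simp add: sum_Vset)
  also have "\<dots> = (\<Sum>b\<in>Ivol. if b = a then E q (V b) else 0)"
    by (intro sum.cong) (simp_all add: lagr_tensor_node[OF nodes_inj _ \<open>a \<in> Ivol\<close>])
  finally show ?thesis using \<open>a \<in> Ivol\<close> by (simp add: finite_PiE)
qed

lemma E_face_entry:
  assumes a: "a \<in> Ivol" and j: "j < d" and b: "b \<in> Iface j"
  shows "E (F j s b) (V a)
       = (if b = restrict a ({..<d}-{j}) then poly (lagr x N (a j)) (sgnb s) else 0)"
proof -
  let ?I = "{..<d}-{j}"
  have "E (F j s b) (V a) = poly (lagr x N (a j)) (sgnb s) * lagr_tensor x N ?I a (X (F j s b))"
    using E_entry a j b by (simp add: lagr_tensor_def prod.remove[of "{..<d}" j])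
  also have "lagr_tensor x N ?I a = lagr_tensor x N ?I (restrict a ?I)"
    unfolding lagr_tensor_def by (intro ext prod.cong) auto
  also have "\<dots> (X (F j s b)) = (if b = restrict a ?I then 1 else 0)"
    using a b by (intro lagr_tensor_node[OF nodes_inj]) auto
  finally show ?thesis by simp
qed

lemma Qh_vol_face_sum:
  assumes a: "a \<in> Ivol" and j: "j < d"
  shows "(\<Sum>q\<in>Fset d N. Qh j (V a) q * f (X q))
     = (\<Prod>k\<in>{..<d}-{j}. w (a k)) / 2 * (poly (lagr x N (a j)) 1 * f ((X (V a))(j := 1))
          - poly (lagr x N (a j)) (-1) * f ((X (V a))(j := -1)))"
proof -
  define a' where "a' = restrict a ({..<d}-{j})"
  have a': "a' \<in> Iface j" using a by (auto simp: a'_def)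
  have X_a': "X (F j s a') = (X (V a))(j := sgnb s)" for s
    using a by (auto simp: a'_def PiE_iff extensional_def fun_eq_iff)
  have face: "(\<Sum>q\<in>Fset_face d N j s. Qh j (V a) q * f (X q))
      = sgnb s * poly (lagr x N (a j)) (sgnb s) * (\<Prod>k\<in>{..<d}-{j}. w (a k)) / 2
          * f ((X (V a))(j := sgnb s))" for s
  proof -
    have "(\<Sum>q\<in>Fset_face d N j s. Qh j (V a) q * f (X q))
        = (\<Sum>b\<in>Iface j. if b = a' then Qh j (V a) (F j s a') * f (X (F j s a')) else 0)"
      unfolding sum_Fset_face using a j by (intro sum.cong) (auto simp: E_face_entry a'_def)
    also have "\<dots> = Qh j (V a) (F j s a') * f (X (F j s a'))"
      using a' by (simp add: finite_PiE)
    moreover have "W (F j s a') = (\<Prod>k\<in>{..<d}-{j}. w (a k))" by (simp add: a'_def)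
    ultimately show ?thesis using E_face_entry[OF a j a', folded a'_def] unfolding X_a' by simp
  qed
  let ?U = "Fset_face d N j True \<union> Fset_face d N j False"
  have "(\<Sum>q\<in>Fset d N. Qh j (V a) q * f (X q)) = (\<Sum>q\<in>?U. Qh j (V a) q * f (X q))"
  proof (rule sum.mono_neutral_right)
    show "?U \<subseteq> Fset d N" using j by (auto simp: Fset_def)
    show "\<forall>q\<in>Fset d N - ?U. Qh j (V a) q * f (X q) = 0"
    proof
      fix q assume q: "q \<in> Fset d N - ?U"
      then obtain k s b where qF: "q = F k s b" "b \<in> Iface k"
        by (auto simp: Fset_def Fset_face_def)
      with q have "k \<noteq> j" by (cases s) auto
      with qF show "Qh j (V a) q * f (X q) = 0" by simp
    qed
  qed simp
  also have "\<dots> = (\<Sum>q\<in>Fset_face d N j True. Qh j (V a) q * f (X q))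
      + (\<Sum>q\<in>Fset_face d N j False. Qh j (V a) q * f (X q))"
    by (intro sum.union_disjoint) (auto simp: Fset_face_def finite_PiE)
  finally show ?thesis unfolding face by (simp add: sgnb_def field_simps)
qed

lemma X_V_fun_upd: "X (V (a(j := m))) = (X (V a))(j := x m)"
  by auto

lemma Qvol_apply:
  assumes a: "a \<in> Ivol" and j: "j < d" and deg: "degree p \<le> N"
    and line: "\<And>t. f ((X (V a))(j := t)) = poly p t"
  shows "(\<Sum>b\<in>Ivol. Qvol d x w N j a b * f (X (V b)))
       = (\<Prod>k\<in>{..<d}-{j}. w (a k)) * (w (a j) * poly (pderiv p) (x (a j)))"
proof -
  have nodes: "f (X (V (a(j := m)))) = poly p (x m)" for m
    unfolding X_V_fun_upd by (rule line)
  have "(\<Sum>b\<in>Ivol. Qvol d x w N j a b * f (X (V b)))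
      = (\<Prod>k\<in>{..<d}-{j}. w (a k)) * (\<Sum>m\<le>N. Q1D x w N (a j) m * f (X (V (a(j := m)))))"
    unfolding Qvol_def by (rule sum_kronecker_row[OF a j])
  also have "\<dots> = (\<Prod>k\<in>{..<d}-{j}. w (a k)) * (w (a j) * poly (pderiv p) (x (a j)))"
    by (simp only: nodes Q1D_apply[OF nodes_inj deg])
  finally show ?thesis .
qed

lemma Qvol_transpose_apply:
  assumes a: "a \<in> Ivol" and j: "j < d" and deg: "degree p \<le> N"
    and line: "\<And>t. f ((X (V a))(j := t)) = poly p t"
  shows "(\<Sum>b\<in>Ivol. Qvol d x w N j b a * f (X (V b)))
       = (\<Prod>k\<in>{..<d}-{j}. w (a k)) * (poly (lagr x N (a j) * p) 1 - poly (lagr x N (a j) * p) (-1)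
            - w (a j) * poly (pderiv p) (x (a j)))"
proof -
  have nodes: "f (X (V (a(j := m)))) = poly p (x m)" for m
    unfolding X_V_fun_upd by (rule line)
  have "(\<Sum>b\<in>Ivol. Qvol d x w N j b a * f (X (V b)))
      = (\<Sum>b\<in>Ivol. (\<Prod>k<d. if k = j then Q1D x w N (b k) (a k)
            else if a k = b k then w (a k) else 0) * f (X (V b)))"
    unfolding Qvol_def by (intro sum.cong arg_cong2[where f = "(*)"] prod.cong) auto
  also have "\<dots> = (\<Prod>k\<in>{..<d}-{j}. w (a k)) * (\<Sum>m\<le>N. Q1D x w N m (a j) * f (X (V (a(j := m)))))"
    by (rule sum_kronecker_row[OF a j, of "\<lambda>u v. Q1D x w N v u"])
  also have "\<dots> = (\<Prod>k\<in>{..<d}-{j}. w (a k)) * (poly (lagr x N (a j) * p) 1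
      - poly (lagr x N (a j) * p) (-1) - w (a j) * poly (pderiv p) (x (a j)))"
    using a j Q1D_transpose_apply[OF nodes_inj deg _ quad_exact, of "a j"] by (simp only: nodes) auto
  finally show ?thesis .
qed

lemma Qh_apply_vol:
  assumes a: "a \<in> Ivol" and j: "j < d" and f: "f \<in> tpoly d (\<lambda>_. N)"
  shows "Qh_apply j (V a) f = W (V a) * pderiv_at f j (X (V a))"
proof -
  obtain p where deg: "degree p \<le> N" and line: "\<And>t. f ((X (V a))(j := t)) = poly p t"
    using tpoly_restrict_line[OF f j] by auto
  have "(\<Sum>q\<in>Vset d N. Qh j (V a) q * f (X q))
      = ((\<Sum>b\<in>Ivol. Qvol d x w N j a b * f (X (V b))) - (\<Sum>b\<in>Ivol. Qvol d x w N j b a * f (X (V b)))) / 2"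
    by (simp add: sum_Vset diff_divide_distrib left_diff_distrib sum_subtractf sum_divide_distrib[symmetric])
  moreover have "(\<Sum>q\<in>Mset d nm. Qh j (V a) q * f (X q)) = 0"
    by (intro sum.neutral) (auto simp: Mset_def Mset_face_def)
  moreover have "W (V a) = w (a j) * (\<Prod>k\<in>{..<d}-{j}. w (a k))"
    using j by (simp add: prod.remove[of "{..<d}" j])
  moreover have "pderiv_at f j (X (V a)) = poly (pderiv p) (x (a j))"
    using line by (simp add: pderiv_at_def fun_eq_iff[symmetric] DERIV_imp_deriv[OF poly_DERIV])
  ultimately show ?thesis
    unfolding Qh_apply_def sum_allnodes Qvol_apply[OF a j deg line] Qvol_transpose_apply[OF a j deg line]
      Qh_vol_face_sum[OF a j] line
    by (simp add: field_simps)
qed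

lemma Qh_apply_face:
  assumes b: "b \<in> Iface k"
  shows "Qh_apply j (F k s b) u = nhat j (F k s b) / 2 *
     ((\<Sum>q\<in>Mset d nm. Emf q (F k s b) * (W q * u (X q)))
        - W (F k s b) * (\<Sum>q\<in>Vset d N. E (F k s b) q * u (X q)))"
proof -
  have "W (F k s b) \<noteq> 0" using face_weight_pos[OF b, of s] by linarith
  then have "(\<Sum>q\<in>Mset d nm. Qh j (F k s b) q * u (X q))
      = nhat j (F k s b) / 2 * (\<Sum>q\<in>Mset d nm. Emf q (F k s b) * (W q * u (X q)))"
    unfolding sum_distrib_left by (intro sum.cong) (auto simp: Mset_def Mset_face_def Efm_def)
  moreover have "(\<Sum>q\<in>Vset d N. Qh j (F k s b) q * u (X q))
      = - (nhat j (F k s b) * W (F k s b) / 2) * (\<Sum>q\<in>Vset d N. E (F k s b) q * u (X q))"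
    unfolding sum_distrib_left sum_Vset by (intro sum.cong) auto
  moreover have "(\<Sum>q\<in>Fset d N. Qh j (F k s b) q * u (X q)) = 0"
    by (intro sum.neutral) (auto simp: Fset_def Fset_face_def)
  ultimately show ?thesis
    unfolding Qh_apply_def sum_allnodes by (simp add: algebra_simps)
qed

lemma X_mortar_normal_coordinate: "k < d \<Longrightarrow> m < nm k s \<Longrightarrow> (X (M k s m))(k := sgnb s) = X (M k s m)"
  using mortar_on_face by auto

lemma Emf_entry:
  assumes b: "b \<in> Iface k" and k: "k < d" and q: "q \<in> Mset_face nm k s"
  shows "Emf q (F k s b) = lagr_tensor x N ({..<d}-{k}) b (X q)"
proof -
  have "lagr_tensor x N ({..<d}-{k}) b \<in> tpoly d ((\<lambda>_. N)(k := 0))"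
    using b by (intro tpoly_mono_degree[OF tpoly_lagr_tensor]) auto
  then have "lagr_tensor x N ({..<d}-{k}) b (X q)
      = (\<Sum>b'\<in>Iface k. Emf q (F k s b') * lagr_tensor x N ({..<d}-{k}) b (X (F k s b')))"
    using Emf_interp k q by (simp add: sum_Fset_face)
  also have "\<dots> = (\<Sum>b'\<in>Iface k. if b' = b then Emf q (F k s b') else 0)"
  proof (intro sum.cong refl)
    fix b' assume "b' \<in> Iface k"
    then have "lagr_tensor x N ({..<d}-{k}) b (X (F k s b')) = (if b' = b then 1 else 0)"
      using b by (intro lagr_tensor_node[OF nodes_inj]) auto
    then show "Emf q (F k s b') * lagr_tensor x N ({..<d}-{k}) b (X (F k s b'))
        = (if b' = b then Emf q (F k s b') else 0)" by simp
  qed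
  finally show ?thesis using b by (simp add: finite_PiE)
qed

text \<open>The product of a face Lagrange polynomial with the trace of \<open>u\<close> has degree at most
  \<open>N + D\<close> in the face coordinates, so the mortar rule can be traded for the face rule, on
  which the Lagrange polynomial picks out the node \<open>b\<close>.\<close>

lemma Emf_transpose_weighted_apply:
  assumes k: "k < d" and b: "b \<in> Iface k" and D: "D \<le> Nf" "D \<le> Nm"
    and u: "(\<lambda>y. u (y(k := sgnb s))) \<in> tpoly d ((\<lambda>_. D)(k := 0))"
  shows "(\<Sum>q\<in>Mset d nm. Emf q (F k s b) * (W q * u (X q))) = W (F k s b) * u (X (F k s b))"
proof -
  define \<phi> where "\<phi> y = lagr_tensor x N ({..<d}-{k}) b y * u (y(k := sgnb s))" for y
  have "\<phi> \<in> tpoly d (\<lambda>i. (if i \<in> {..<d}-{k} then N else 0) + ((\<lambda>_. D)(k := 0)) i)"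
    unfolding \<phi>_def using b by (intro tpoly_mult tpoly_lagr_tensor u) auto
  then have \<phi>_Nm: "\<phi> \<in> tpoly d ((\<lambda>_. N + Nm)(k := 0))" and \<phi>_Nf: "\<phi> \<in> tpoly d ((\<lambda>_. N + Nf)(k := 0))"
    using D by (auto elim!: tpoly_mono_degree)
  have "(\<Sum>q\<in>Mset d nm. Emf q (F k s b) * (W q * u (X q)))
      = (\<Sum>q\<in>Mset_face nm k s. Emf q (F k s b) * (W q * u (X q)))"
    by (rule sum_Mset_Emf_block[OF k b])
  also have "\<dots> = (\<Sum>q\<in>Mset_face nm k s. W q * \<phi> (X q))"
  proof (intro sum.cong refl)
    fix q assume q: "q \<in> Mset_face nm k s"
    then obtain m where "q = M k s m" "m < nm k s" by (auto simp: Mset_face_def)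
    with k have "(X q)(k := sgnb s) = X q" by (simp only: X_mortar_normal_coordinate)
    then have "\<phi> (X q) = lagr_tensor x N ({..<d}-{k}) b (X q) * u (X q)"
      unfolding \<phi>_def by (simp only:)
    with Emf_entry[OF b k q] show "Emf q (F k s b) * (W q * u (X q)) = W q * \<phi> (X q)" by simp
  qed
  also have "\<dots> = face_integral d k s \<phi>"
    using mortar_exact k \<phi>_Nm by (simp add: face_quad_exact_def)
  also have "\<dots> = (\<Sum>q\<in>Fset_face d N k s. W q * \<phi> (X q))"
    using face_exact k \<phi>_Nf by (simp add: face_quad_exact_def)
  also have "\<dots> = (\<Sum>b'\<in>Iface k. if b' = b then W (F k s b') * u (X (F k s b')) else 0)"
    unfolding sum_Fset_face
  proof (intro sum.cong refl)
    fix b' assume "b' \<in> Iface k"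
    then have "lagr_tensor x N ({..<d}-{k}) b (X (F k s b')) = (if b' = b then 1 else 0)"
      using b by (intro lagr_tensor_node[OF nodes_inj]) auto
    moreover have "(X (F k s b'))(k := sgnb s) = X (F k s b')" by auto
    then have "\<phi> (X (F k s b')) = lagr_tensor x N ({..<d}-{k}) b (X (F k s b')) * u (X (F k s b'))"
      unfolding \<phi>_def by (simp only:)
    ultimately show "W (F k s b') * \<phi> (X (F k s b'))
        = (if b' = b then W (F k s b') * u (X (F k s b')) else 0)"
      by (cases "b' = b") simp_all
  qed
  also have "\<dots> = W (F k s b) * u (X (F k s b))"
    using b by (simp add: finite_PiE)
  finally show ?thesis .
qed

lemma Qh_apply_face_eq_0:
  assumes k: "k < d" and b: "b \<in> Iface k" and u: "u \<in> tpoly d (\<lambda>_. N)"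
    and D: "D \<le> Nf" "D \<le> Nm"
    and trace: "j = k \<Longrightarrow> (\<lambda>y. u (y(k := sgnb s))) \<in> tpoly d ((\<lambda>_. D)(k := 0))"
  shows "Qh_apply j (F k s b) u = 0"
proof (cases "j = k")
  case True
  have "(\<Sum>q\<in>Vset d N. E (F k s b) q * u (X q)) = u (X (F k s b))"
    using E_interp u k b by simp
  with True show ?thesis
    by (simp add: Qh_apply_face[OF b] Emf_transpose_weighted_apply[OF k b D trace])
qed (simp add: Qh_apply_face[OF b])

lemma Qh_apply_mortar:
  assumes "k < d" "m < nm k s"
  shows "Qh_apply j (M k s m) u = nhat j (M k s m) * W (M k s m) / 2
     * (u (X (M k s m)) - (\<Sum>q\<in>Fset d N. Emf (M k s m) q * u (X q)))"
proof -
  have "(\<Sum>q\<in>Mset d nm. Qh j (M k s m) q * u (X q))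
      = (\<Sum>q\<in>Mset d nm. if q = M k s m then nhat j (M k s m) * W (M k s m) / 2 * u (X (M k s m)) else 0)"
  proof (intro sum.cong refl)
    fix q assume "q \<in> Mset d nm"
    then obtain k' s' m' where "q = M k' s' m'" by (auto simp: Mset_def Mset_face_def)
    then show "Qh j (M k s m) q * u (X q)
        = (if q = M k s m then nhat j (M k s m) * W (M k s m) / 2 * u (X (M k s m)) else 0)"
      by (cases "(k', s', m') = (k, s, m)") auto
  qed
  also have "\<dots> = nhat j (M k s m) * W (M k s m) / 2 * u (X (M k s m))"
    using assms by simp
  finally have "(\<Sum>q\<in>Mset d nm. Qh j (M k s m) q * u (X q))
      = nhat j (M k s m) * W (M k s m) / 2 * u (X (M k s m))" .
  moreover have "(\<Sum>q\<in>Fset d N. Qh j (M k s m) q * u (X q))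
      = - (nhat j (M k s m) * W (M k s m) / 2) * (\<Sum>q\<in>Fset d N. Emf (M k s m) q * u (X q))"
    unfolding sum_distrib_left
  proof (intro sum.cong refl)
    fix q assume "q \<in> Fset d N"
    then obtain k' s' b where "q = F k' s' b" by (auto simp: Fset_def Fset_face_def)
    then show "Qh j (M k s m) q * u (X q)
        = - (nhat j (M k s m) * W (M k s m) / 2) * (Emf (M k s m) q * u (X q))" by simp
  qed
  moreover have "(\<Sum>q\<in>Vset d N. Qh j (M k s m) q * u (X q)) = 0"
    by (simp add: sum_Vset)
  ultimately show ?thesis
    unfolding Qh_apply_def sum_allnodes by (simp add: algebra_simps)
qed

lemma Emf_apply:
  assumes k: "k < d" and m: "m < nm k s" and u: "u \<in> tpoly d (\<lambda>_. N)"
  shows "(\<Sum>q\<in>Fset d N. Emf (M k s m) q * u (X q)) = u (X (M k s m))"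
proof -
  have "(\<Sum>q\<in>Fset d N. Emf (M k s m) q * u (X q)) = (\<Sum>q\<in>Fset_face d N k s. Emf (M k s m) q * u (X q))"
    by (rule sum_Fset_Emf_block[OF k m])
  also have "\<dots> = (\<Sum>q\<in>Fset_face d N k s. Emf (M k s m) q * u ((X q)(k := sgnb s)))"
  proof (intro sum.cong refl)
    fix q assume "q \<in> Fset_face d N k s"
    then obtain b where "q = F k s b" by (auto simp: Fset_face_def)
    then have "(X q)(k := sgnb s) = X q" by auto
    then show "Emf (M k s m) q * u (X q) = Emf (M k s m) q * u ((X q)(k := sgnb s))" by (simp only:)
  qed
  also have "\<dots> = u ((X (M k s m))(k := sgnb s))"
    using Emf_interp[rule_format, OF k tpoly_fix_coordinate[OF u k], of "M k s m"] m by simp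
  also have "\<dots> = u (X (M k s m))"
    by (simp only: X_mortar_normal_coordinate[OF k m])
  finally show ?thesis .
qed

lemma Qh_apply_mortar_eq_0:
  assumes "k < d" "m < nm k s" "u \<in> tpoly d (\<lambda>_. N)"
  shows "Qh_apply j (M k s m) u = 0"
  by (simp only: Qh_apply_mortar[OF assms(1,2)] Emf_apply[OF assms]) simp

lemma Qphys_row_sum_eq_0:
  assumes g: "\<forall>j<d. g i j \<in> tpoly d (\<lambda>_. N)"
    and g_trace: "\<forall>k<d. \<forall>t. (\<lambda>y. g i k (y(k := t))) \<in> tpoly d ((\<lambda>_. D)(k := 0))"
    and D: "D \<le> Nf" "D \<le> Nm"
    and GCL: "\<forall>y. (\<forall>k<d. -1 \<le> y k \<and> y k \<le> 1) \<longrightarrow> (\<Sum>j<d. pderiv_at (g i j) j y) = 0"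
    and p: "p \<in> allnodes d N nm"
  shows "(\<Sum>q\<in>allnodes d N nm. Qphys d N x w xm wm E Emf g i p q) = 0"
proof (cases p)
  case (V a)
  then have a: "a \<in> Ivol" using p by simp
  have "Qh_apply j (V a) (\<lambda>_. 1) = 0" if "j < d" for j
    using Qh_apply_vol[OF a that tpoly_const] by (simp add: pderiv_at_def)
  moreover have "Qh_apply j (V a) (g i j) = W (V a) * pderiv_at (g i j) j (X (V a))" if "j < d" for j
    using Qh_apply_vol[OF a that] g that by simp
  moreover have "(\<Sum>j<d. pderiv_at (g i j) j (X (V a))) = 0"
    using GCL a nodes_bounded by (auto simp: PiE_iff)
  ultimately show ?thesis
    unfolding Qphys_row_sum V by (simp add: sum_distrib_left[symmetric])
next
  case (F k s b)
  then have k: "k < d" and b: "b \<in> Iface k" using p by auto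
  have "Qh_apply j p (\<lambda>_. 1) = 0" for j
    unfolding F using D by (intro Qh_apply_face_eq_0[OF k b]) (simp_all add: tpoly_const)
  moreover have "(\<lambda>y. g i k (y(k := sgnb s))) \<in> tpoly d ((\<lambda>_. D)(k := 0))"
    using g_trace k by blast
  then have "Qh_apply j p (g i j) = 0" if "j < d" for j
    unfolding F using D g that by (intro Qh_apply_face_eq_0[OF k b]) simp_all
  ultimately show ?thesis unfolding Qphys_row_sum by simp
next
  case (M k s m)
  then have k: "k < d" and m: "m < nm k s" using p by auto
  have "Qh_apply j p (\<lambda>_. 1) = 0" "Qh_apply j p (g i j) = 0" if "j < d" for j
    unfolding M using g that by (simp_all add: Qh_apply_mortar_eq_0[OF k m] tpoly_const)
  then show ?thesis unfolding Qphys_row_sum by simp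
qed

end

lemma geometric_terms_degrees:
  fixes g :: "nat \<Rightarrow> nat \<Rightarrow> (nat \<Rightarrow> real) \<Rightarrow> real"
  assumes "((\<forall>i<d. \<forall>j<d. g i j \<in> tpoly d (\<lambda>_. Ngeo)) \<and> Ngeo \<le> min N (min Nf Nm))
       \<or> ((\<forall>i<d. \<forall>j<d. g i j \<in> tpoly d (\<lambda>k. if k = j then Ngeo else Ngeo - 1))
          \<and> Ngeo \<le> min N (min (Nf + 1) (Nm + 1)))"
  obtains D where "D \<le> Nf" "D \<le> Nm" "\<forall>i<d. \<forall>j<d. g i j \<in> tpoly d (\<lambda>_. N)"
    "\<forall>i<d. \<forall>k<d. \<forall>t. (\<lambda>y. g i k (y(k := t))) \<in> tpoly d ((\<lambda>_. D)(k := 0))"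
  using assms
proof
  assume a: "(\<forall>i<d. \<forall>j<d. g i j \<in> tpoly d (\<lambda>_. Ngeo)) \<and> Ngeo \<le> min N (min Nf Nm)"
  show thesis
  proof (rule that[of Ngeo])
    show "\<forall>i<d. \<forall>j<d. g i j \<in> tpoly d (\<lambda>_. N)"
      using a by (auto elim!: tpoly_mono_degree)
    show "\<forall>i<d. \<forall>k<d. \<forall>t. (\<lambda>y. g i k (y(k := t))) \<in> tpoly d ((\<lambda>_. Ngeo)(k := 0))"
      using a by (auto intro: tpoly_trace)
  qed (use a in auto)
next
  assume b: "(\<forall>i<d. \<forall>j<d. g i j \<in> tpoly d (\<lambda>k. if k = j then Ngeo else Ngeo - 1))
      \<and> Ngeo \<le> min N (min (Nf + 1) (Nm + 1))"
  show thesis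
  proof (rule that[of "Ngeo - 1"])
    show "\<forall>i<d. \<forall>j<d. g i j \<in> tpoly d (\<lambda>_. N)"
    proof (intro allI impI)
      fix i j assume "i < d" "j < d"
      with b have "g i j \<in> tpoly d (\<lambda>k. if k = j then Ngeo else Ngeo - 1)" by blast
      then show "g i j \<in> tpoly d (\<lambda>_. N)" by (rule tpoly_mono_degree) (use b in auto)
    qed
    show "\<forall>i<d. \<forall>k<d. \<forall>t. (\<lambda>y. g i k (y(k := t))) \<in> tpoly d ((\<lambda>_. Ngeo - 1)(k := 0))"
    proof (intro allI impI)
      fix i k t assume "i < d" "k < d"
      with b have "g i k \<in> tpoly d (\<lambda>j. if j = k then Ngeo else Ngeo - 1)" by blast
      from tpoly_trace[OF this \<open>k < d\<close>]
      show "(\<lambda>y. g i k (y(k := t))) \<in> tpoly d ((\<lambda>_. Ngeo - 1)(k := 0))" by simp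
    qed
  qed (use b in auto)
qed

theorem mainTheorem4:
  fixes d N Nf Nm Ngeo :: nat
    and x w :: "nat \<Rightarrow> real"
    and nm :: "nat \<Rightarrow> bool \<Rightarrow> nat"
    and xm :: "nat \<Rightarrow> bool \<Rightarrow> nat \<Rightarrow> nat \<Rightarrow> real"
    and wm :: "nat \<Rightarrow> bool \<Rightarrow> nat \<Rightarrow> real"
    and E Emf :: "hnode \<Rightarrow> hnode \<Rightarrow> real"
    and g :: "nat \<Rightarrow> nat \<Rightarrow> (nat \<Rightarrow> real) \<Rightarrow> real"
  assumes hd: "d = 2 \<or> d = 3"
    and hN: "N \<ge> 1"
    and hquad: "gauss_legendre N x w \<or> gauss_lobatto N x w"
    \<comment> \<open>E maps volume values of a Q^N polynomial to its face values\<close>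
    and hE: "\<forall>f \<in> tpoly d (\<lambda>_. N). \<forall>fn \<in> Fset d N.
               (\<Sum>a\<in>Vset d N. E fn a * f (pt x xm a)) = f (pt x xm fn)"
    \<comment> \<open>mortar nodes lie on their face\<close>
    and hxm: "\<forall>k<d. \<forall>s. \<forall>j<nm k s. xm k s j k = sgnb s \<and>
               (\<forall>i<d. -1 \<le> xm k s j i \<and> xm k s j i \<le> 1)"
    \<comment> \<open>E_mf is block diagonal over faces\<close>
    and hEmf_blk: "\<forall>mn \<in> Mset d nm. \<forall>fn \<in> Fset d N.
               (case (mn, fn) of (M k s _, F k' s' _) \<Rightarrow> (k, s) \<noteq> (k', s') \<longrightarrow> Emf mn fn = 0
                                | _ \<Rightarrow> True)"
    \<comment> \<open>each block interpolates face Q^N polynomials to the mortar nodes\<close>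
    and hEmf: "\<forall>k<d. \<forall>s. \<forall>q \<in> tpoly d ((\<lambda>_. N)(k := 0)). \<forall>mn \<in> Mset_face nm k s.
               (\<Sum>fn\<in>Fset_face d N k s. Emf mn fn * q (pt x xm fn)) = q (pt x xm mn)"
    and hface_exact: "\<forall>k<d. \<forall>s. face_quad_exact d k s (N + Nf) (Fset_face d N k s) (pt x xm) (wt d w wm)"
    and hmortar_exact: "\<forall>k<d. \<forall>s. face_quad_exact d k s (N + Nm) (Mset_face nm k s) (pt x xm) (wt d w wm)"
    \<comment> \<open>discrete geometric conservation law on the reference element\<close>
    and hGCL: "\<forall>i<d. \<forall>y. (\<forall>k<d. -1 \<le> y k \<and> y k \<le> 1) \<longrightarrow> (\<Sum>j<d. pderiv_at (g i j) j y) = 0"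
    and hNgeo: "Ngeo \<ge> 1"
    and hcases:
      "((\<forall>i<d. \<forall>j<d. g i j \<in> tpoly d (\<lambda>_. Ngeo)) \<and> Ngeo \<le> min N (min Nf Nm))
       \<or> ((\<forall>i<d. \<forall>j<d. g i j \<in> tpoly d (\<lambda>k. if k = j then Ngeo else Ngeo - 1))
          \<and> Ngeo \<le> min N (min (Nf + 1) (Nm + 1)))"
  shows "\<forall>i<d.
           (\<forall>p \<in> allnodes d N nm. \<forall>q \<in> allnodes d N nm.
              Qphys d N x w xm wm E Emf g i p q + Qphys d N x w xm wm E Emf g i q p
                = (if p = q \<and> is_mortar p then nphys d x xm g i p * wt d w wm p else 0))
         \<and> (\<forall>p \<in> allnodes d N nm. (\<Sum>q \<in> allnodes d N nm. Qphys d N x w xm wm E Emf g i p q) = 0)"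
proof -
  interpret mortar_sbp d N Nf Nm x w nm xm wm E Emf
    using gauss_rule_properties[OF hquad] hE hxm hEmf_blk hEmf hface_exact hmortar_exact
    by unfold_locales auto
  obtain D where D: "D \<le> Nf" "D \<le> Nm" and g: "\<forall>i<d. \<forall>j<d. g i j \<in> tpoly d (\<lambda>_. N)"
    and g_trace: "\<forall>i<d. \<forall>k<d. \<forall>t. (\<lambda>y. g i k (y(k := t))) \<in> tpoly d ((\<lambda>_. D)(k := 0))"
    using geometric_terms_degrees[OF hcases] .
  show ?thesis
    using Qphys_plus_transpose Qphys_row_sum_eq_0[OF _ _ D] g g_trace hGCL by simp
qed

end
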